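(* In the modal logic $\mathrm{SN}$ (defined in the context): if $\vdash A\to B$ then $\vdash NB\to NA$; and if $\vdash A\leftrightarrow B$ then $\vdash NA\leftrightarrow NB$.
   Context: $\mathrm{SN}$ is the logic whose formulas are built from propositional atoms $p$, constants $\top,\bot$ and a propositional constant $t$, using $\neg,\wedge,\vee,\to$ and a unary connective $N$ (which may be applied to any formula and iterated). Its theorems ($\vdash A$) are generated by: all classical tautologies (in this language); the axioms (K) $N(A\wedge B)\leftrightarrow NA\vee NB$; (F) $\neg NA\leftrightarrow N\neg A$; (C) $A\to NNA$; (A) $t\to(p\to N\neg p)$ for atoms $p$; (T) $t\leftrightarrow Nt$; and the rules modus ponens (from $A$ and $A\to B$ infer $B$) and (N) from $A$ infer $N\neg A$. *)

theory Defs
  imports Main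
begin

datatype 'a fm =
    Atom 'a
  | Top
  | Bot
  | T
  | Neg "'a fm"
  | Conj "'a fm" "'a fm"
  | Disj "'a fm" "'a fm"
  | Imp "'a fm" "'a fm"
  | Nc "'a fm"

definition Iff :: "'a fm \<Rightarrow> 'a fm \<Rightarrow> 'a fm" where
  "Iff A B = Conj (Imp A B) (Imp B A)"

text \<open>Classical (propositional) evaluation: atoms, the constant t and all
  formulas of the form N A are treated as propositional variables.\<close>
fun evalc :: "('a \<Rightarrow> bool) \<Rightarrow> bool \<Rightarrow> ('a fm \<Rightarrow> bool) \<Rightarrow> 'a fm \<Rightarrow> bool" where
  "evalc v vt vN (Atom p) = v p"
| "evalc v vt vN Top = True"
| "evalc v vt vN Bot = False"
| "evalc v vt vN T = vt"
| "evalc v vt vN (Neg A) = (\<not> evalc v vt vN A)"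
| "evalc v vt vN (Conj A B) = (evalc v vt vN A \<and> evalc v vt vN B)"
| "evalc v vt vN (Disj A B) = (evalc v vt vN A \<or> evalc v vt vN B)"
| "evalc v vt vN (Imp A B) = (evalc v vt vN A \<longrightarrow> evalc v vt vN B)"
| "evalc v vt vN (Nc A) = vN A"

definition tautology :: "'a fm \<Rightarrow> bool" where
  "tautology A = (\<forall>v vt vN. evalc v vt vN A)"

inductive thm_SN :: "'a fm \<Rightarrow> bool" where
  taut: "tautology A \<Longrightarrow> thm_SN A"
| axK: "thm_SN (Iff (Nc (Conj A B)) (Disj (Nc A) (Nc B)))"
| axF: "thm_SN (Iff (Neg (Nc A)) (Nc (Neg A)))"
| axC: "thm_SN (Imp A (Nc (Nc A)))"
| axA: "thm_SN (Imp T (Imp (Atom p) (Nc (Neg (Atom p)))))"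
| axT: "thm_SN (Iff T (Nc T))"
| mp: "thm_SN A \<Longrightarrow> thm_SN (Imp A B) \<Longrightarrow> thm_SN B"
| ruleN: "thm_SN A \<Longrightarrow> thm_SN (Nc (Neg A))"

end

theory Submission
  imports Defs
begin

text \<open>From \<open>\<turnstile> A \<rightarrow> B\<close> we get \<open>\<turnstile> \<not>(A \<and> \<not>B)\<close>, so rule N yields
  \<open>\<turnstile> N\<not>\<not>(A \<and> \<not>B)\<close>.  Two instances of (F) turn this into \<open>\<turnstile> N(A \<and> \<not>B)\<close>,
  (K) into \<open>\<turnstile> NA \<or> N\<not>B\<close>, and (F) once more into \<open>\<turnstile> NA \<or> \<not>NB\<close>, i.e.
  \<open>\<turnstile> NB \<rightarrow> NA\<close>.  Everything between these uses of the axioms is classical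
  propositional reasoning, with the \<open>N\<close>-formulas treated as atoms.\<close>

lemma thm_SN_taut_mp: "thm_SN P \<Longrightarrow> tautology (Imp P Q) \<Longrightarrow> thm_SN Q"
  by (meson thm_SN.mp thm_SN.taut)

lemma thm_SN_conjI: "thm_SN P \<Longrightarrow> thm_SN Q \<Longrightarrow> thm_SN (Conj P Q)"
proof -
  assume "thm_SN P" and "thm_SN Q"
  moreover have "thm_SN (Imp P (Imp Q (Conj P Q)))"
    by (rule taut) (simp add: tautology_def)
  ultimately show ?thesis by (meson thm_SN.mp)
qed

lemma thm_SN_Nc_antimono:
  assumes "thm_SN (Imp A B)"
  shows "thm_SN (Imp (Nc B) (Nc A))"
proof -
  define Y where "Y = Conj A (Neg B)"
  have "thm_SN (Neg Y)"
    using assms by (rule thm_SN_taut_mp) (simp add: tautology_def Y_def)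
  then have "thm_SN (Nc (Neg (Neg Y)))" by (rule ruleN)
  then have "thm_SN (Conj (Nc (Neg (Neg Y)))
      (Conj (Iff (Neg (Nc (Neg Y))) (Nc (Neg (Neg Y))))
      (Conj (Iff (Neg (Nc Y)) (Nc (Neg Y)))
      (Conj (Iff (Nc Y) (Disj (Nc A) (Nc (Neg B))))
            (Iff (Neg (Nc B)) (Nc (Neg B)))))))"
    unfolding Y_def by (intro thm_SN_conjI axF axK)
  then show ?thesis
    by (rule thm_SN_taut_mp) (auto simp: tautology_def Iff_def)
qed

lemma thm_SN_Iff_ImpD:
  assumes "thm_SN (Iff A B)"
  shows "thm_SN (Imp A B)" and "thm_SN (Imp B A)"
  using assms by (auto intro: thm_SN_taut_mp simp: tautology_def Iff_def)

theorem lemma32: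
  fixes A B :: "'a fm"
  shows "(thm_SN (Imp A B) \<longrightarrow> thm_SN (Imp (Nc B) (Nc A)))
       \<and> (thm_SN (Iff A B) \<longrightarrow> thm_SN (Iff (Nc A) (Nc B)))"
proof (intro conjI impI)
  show "thm_SN (Imp A B) \<Longrightarrow> thm_SN (Imp (Nc B) (Nc A))"
    by (rule thm_SN_Nc_antimono)
next
  assume "thm_SN (Iff A B)"
  note AB = thm_SN_Iff_ImpD[OF this]
  show "thm_SN (Iff (Nc A) (Nc B))"
    unfolding Iff_def
    using thm_SN_Nc_antimono[OF AB(2)] thm_SN_Nc_antimono[OF AB(1)]
    by (rule thm_SN_conjI)
qed

end
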